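(* Fix $c>0$ and an integer $k\ge1$, and let $\Phi\in\Omega(n,\lfloor c2^n\rfloor)$. Then with probability $1-o(1)$ (as $n\to\infty$), PUR does not reject at any of the stages $n,n-1,\dots,n-k+1$.
   Context: $\mathcal H_n$ is the set of pairs $(P,S)$ with $P\in\{\emptyset,\{1\},\dots,\{n\}\}$, $S\subseteq\{1,\dots,n\}$, $(P,S)\ne(\emptyset,\emptyset)$, representing the Horn clause $\bigvee_{i\in P}x_i\vee\bigvee_{j\in S}\neg x_j$ (so $|\mathcal H_n|\sim n2^n$; the paper writes this number as $(n+2)2^n-1$); $\Omega(n,m)$ is the distribution of the conjunction of $m$ clauses drawn independently, uniformly with repetition from $\mathcal H_n$. Algorithm PUR on a Horn formula $\Phi$: if $\Phi$ has no positive unit clause (single literal $x_i$), accept. Otherwise choose uniformly at random a positive unit clause $x_i$; if $\Phi$ contains the clause $\neg x_i$, reject; otherwise set $x_i=1$ (delete clauses containing $x_i$, delete $\neg x_i$ from the others) and recurse. Stage $t$ is the iteration performed when exactly $t$ variables are unassigned (first iteration = stage $n$). *)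

theory Defs
  imports "HOL-Probability.Probability"
begin

text \<open>A Horn clause (P,S): P = None (no positive literal) or Some i (positive literal x_i);
  S = set of indices of negated variables.\<close>
type_synonym clause = "nat option \<times> nat set"

definition horn_clauses :: "nat \<Rightarrow> clause set" where
  "horn_clauses n = {(P, S). (P = None \<or> (\<exists>i\<in>{1..n}. P = Some i)) \<and> S \<subseteq> {1..n}
                            \<and> (P, S) \<noteq> (None, {})}"

primrec iid_list :: "nat \<Rightarrow> 'a pmf \<Rightarrow> 'a list pmf" where
  "iid_list 0 p = return_pmf []"
| "iid_list (Suc m) p = bind_pmf p (\<lambda>x. map_pmf (Cons x) (iid_list m p))"

text \<open>The distribution Omega(n,m) of random Horn formulas (conjunction of the listed clauses).\<close>
definition Omega :: "nat \<Rightarrow> nat \<Rightarrow> clause list pmf" where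
  "Omega n m = iid_list m (pmf_of_set (horn_clauses n))"

definition pos_units :: "clause list \<Rightarrow> nat set" where
  "pos_units \<Phi> = {i. (Some i, {}) \<in> set \<Phi>}"

definition assign_true :: "nat \<Rightarrow> clause list \<Rightarrow> clause list" where
  "assign_true i \<Phi> = map (\<lambda>(P, S). (P, S - {i})) (filter (\<lambda>(P, S). P \<noteq> Some i) \<Phi>)"

text \<open>pur_rejects_within k Phi: the (random) event that PUR run on Phi rejects during one of
  its first k iterations (i.e. at one of the stages n, n-1, ..., n-k+1).\<close>
primrec pur_rejects_within :: "nat \<Rightarrow> clause list \<Rightarrow> bool pmf" where
  "pur_rejects_within 0 \<Phi> = return_pmf False"
| "pur_rejects_within (Suc k) \<Phi> =
     (if pos_units \<Phi> = {} then return_pmf False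
      else bind_pmf (pmf_of_set (pos_units \<Phi>))
        (\<lambda>i. if (None, {i}) \<in> set \<Phi> then return_pmf True
             else pur_rejects_within k (assign_true i \<Phi>)))"

end

theory Submission
  imports Defs
begin

text \<open>If PUR rejects within its first \<open>k\<close> stages, the variables \<open>B\<close> it has set so far
  (\<open>1 \<le> |B| \<le> k\<close>) were each forced by a clause \<open>x\<^sub>b \<or> \<not>T\<^sub>b\<close> with \<open>T\<^sub>b \<subseteq> B\<close>,
  and the rejection comes from a negative clause \<open>\<not>S\<close> with \<open>S \<subseteq> B\<close>: the formula contains
  \<open>|B| + 1\<close> prescribed distinct clauses. For \<open>|B| = j\<close> there are at most \<open>n\<^sup>j 2\<^bsup>j\<^sup>2 + j\<^esup>\<close>
  such clause sets, and \<open>m \<le> c 2\<^sup>n\<close> uniform draws from at least \<open>n 2\<^sup>n\<close> clauses contain a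
  fixed set of \<open>j + 1\<close> clauses with probability at most \<open>(c/n)\<^bsup>j+1\<^esup>\<close>. The union bound
  gives rejection probability \<open>O(1/n)\<close>.\<close>

lemma power_add_ge_two_terms:
  fixes x y :: real
  assumes "0 \<le> x" "0 \<le> y"
  shows "x ^ r + real r * y * x ^ (r - 1) \<le> (x + y) ^ r"
proof (cases r)
  case (Suc s)
  have "(x + y) ^ r = (\<Sum>i\<le>r. real (r choose i) * y ^ i * x ^ (r - i))"
    by (subst add.commute) (rule binomial_ring)
  also have "\<dots> \<ge> (\<Sum>i\<in>{0, 1}. real (r choose i) * y ^ i * x ^ (r - i))"
    by (rule sum_mono2) (use assms Suc in auto)
  finally show ?thesis using Suc by simp
qed simp

lemma binomial_mult_power_div_le:
  fixes c :: real
  assumes "n \<ge> 1" and "c \<ge> 0"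
  shows "real (n choose j) * (c / n) ^ (j + 1) \<le> c ^ (j + 1) / n"
proof -
  have "n choose j \<le> n ^ j"
    using binomial_fact_pow[of n j] fact_ge_1[of j, where 'a=nat]
    by (metis le_trans mult_le_mono2 mult.right_neutral)
  then have "real (n choose j) * (c / n) ^ (j + 1) \<le> real n ^ j * (c / n) ^ (j + 1)"
    using assms by (intro mult_right_mono) (auto simp flip: of_nat_power)
  also have "\<dots> = c ^ (j + 1) / n"
    using assms by (simp add: power_divide field_simps)
  finally show ?thesis .
qed

lemma pmf_bind_True_le:
  assumes "\<And>x. x \<in> set_pmf M \<Longrightarrow> True \<in> set_pmf (f x) \<Longrightarrow> x \<in> A"
  shows "pmf (bind_pmf M f) True \<le> measure_pmf.prob M A"
proof -
  have "pmf (bind_pmf M f) True = (\<integral>x. pmf (f x) True \<partial>M)"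
    by (rule pmf_bind)
  also have "\<dots> \<le> (\<integral>x. indicator A x \<partial>M)"
  proof (rule integral_mono_AE)
    show "integrable M (\<lambda>x. pmf (f x) True)"
      by (intro measure_pmf.integrable_const_bound[where B=1]) (auto simp: pmf_le_1)
    show "integrable M (indicator A :: _ \<Rightarrow> real)"
      by (intro integrable_real_indicator) (auto simp: measure_pmf.emeasure_finite less_top[symmetric])
    show "AE x in M. pmf (f x) True \<le> indicator A x"
      using assms by (intro AE_pmfI) (auto simp: pmf_le_1 set_pmf_iff indicator_def)
  qed
  also have "\<dots> = measure_pmf.prob M A"
    by simp
  finally show ?thesis .
qed

lemma measure_pmf_le_card_mult:
  assumes "\<And>x. pmf p x \<le> q" and "finite C"
  shows "measure_pmf.prob p C \<le> real (card C) * q"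
proof -
  have "measure_pmf.prob p C = (\<Sum>x\<in>C. pmf p x)"
    using assms(2) by (rule measure_measure_pmf_finite)
  also have "\<dots> \<le> real (card C) * q"
    using sum_mono[of C "pmf p" "\<lambda>_. q"] assms(1) by simp
  finally show ?thesis .
qed

lemma measure_iid_list_Suc:
  "measure_pmf.prob (iid_list (Suc m) p) A =
     (\<integral>x. measure_pmf.prob (iid_list m p) (Cons x -` A) \<partial>p)"
  unfolding iid_list.simps measure_pmf_bind
  by (subst measure_pmf.measure_bind[where N="count_space UNIV"])
     (auto simp: measurable_measure_pmf space_subprob_algebra subprob_space_measure_pmf measure_map_pmf)

lemma measure_iid_list_contains_le:
  assumes pmf_le: "\<And>x. pmf p x \<le> q" and "finite C"
  shows "measure_pmf.prob (iid_list m p) {xs. C \<subseteq> set xs} \<le> (real m * q) ^ card C"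
  using \<open>finite C\<close>
proof (induction m arbitrary: C)
  case 0
  then show ?case by (cases "C = {}") auto
next
  case (Suc m)
  have "0 \<le> q" using pmf_le[of undefined] pmf_nonneg[of p undefined] by linarith
  define a where "a = (real m * q) ^ card C"
  define b where "b = (real m * q) ^ (card C - 1)"
  have "0 \<le> a" "0 \<le> b" using \<open>0 \<le> q\<close> by (simp_all add: a_def b_def)
  have step: "measure_pmf.prob (iid_list m p) {ys. C - {x} \<subseteq> set ys} \<le> a + b * indicator C x"
    for x
  proof (cases "x \<in> C")
    case True
    then show ?thesis using Suc.IH[of "C - {x}"] Suc.prems \<open>0 \<le> a\<close> by (simp add: b_def)
  next
    case False
    then show ?thesis using Suc.IH[of C] Suc.prems by (simp add: a_def)
  qed
  have integrable_indicator: "integrable p (\<lambda>x. b * indicator C x)"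
    by (intro integrable_mult_right integrable_real_indicator)
       (auto simp: measure_pmf.emeasure_finite less_top[symmetric])
  have cons_preimage: "Cons x -` {xs. C \<subseteq> set xs} = {ys. C - {x} \<subseteq> set ys}" for x
    by auto
  have "measure_pmf.prob (iid_list (Suc m) p) {xs. C \<subseteq> set xs} =
      (\<integral>x. measure_pmf.prob (iid_list m p) {ys. C - {x} \<subseteq> set ys} \<partial>p)"
    by (simp only: measure_iid_list_Suc cons_preimage)
  also have "\<dots> \<le> (\<integral>x. a + b * indicator C x \<partial>p)"
  proof (rule integral_mono)
    show "integrable p (\<lambda>x. measure_pmf.prob (iid_list m p) {ys. C - {x} \<subseteq> set ys})"
      by (intro measure_pmf.integrable_const_bound[where B=1]) auto
  qed (use step integrable_indicator in auto)
  also have "\<dots> = a + b * measure_pmf.prob p C"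
    using integrable_indicator by (subst Bochner_Integration.integral_add) auto
  also have "\<dots> \<le> a + b * (real (card C) * q)"
    using measure_pmf_le_card_mult[OF pmf_le Suc.prems] \<open>0 \<le> b\<close> by (simp add: mult_left_mono)
  also have "\<dots> \<le> (real (Suc m) * q) ^ card C"
    using power_add_ge_two_terms[of "real m * q" q "card C"] \<open>0 \<le> q\<close>
    by (simp add: a_def b_def algebra_simps)
  finally show ?case .
qed

lemma set_pmf_iid_list: "xs \<in> set_pmf (iid_list m p) \<Longrightarrow> set xs \<subseteq> set_pmf p"
  by (induction m arbitrary: xs) (auto, blast)

lemma finite_horn_clauses: "finite (horn_clauses n)"
proof (rule finite_subset)
  show "horn_clauses n \<subseteq> insert None (Some ` {1..n}) \<times> Pow {1..n}"
    by (auto simp: horn_clauses_def)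
qed auto

lemma card_horn_clauses_ge: "n * 2 ^ n \<le> card (horn_clauses n)"
proof -
  have "Some ` {1..n} \<times> Pow {1..n} \<subseteq> horn_clauses n"
    by (auto simp: horn_clauses_def)
  then have "card (Some ` {1..n} \<times> Pow {1..n}) \<le> card (horn_clauses n)"
    by (rule card_mono[OF finite_horn_clauses])
  then show ?thesis
    by (simp add: card_cartesian_product card_image card_Pow)
qed

lemma horn_clauses_nonempty: "n \<ge> 1 \<Longrightarrow> horn_clauses n \<noteq> {}"
proof -
  assume "n \<ge> 1"
  then have "(Some 1, {}) \<in> horn_clauses n"
    by (auto simp: horn_clauses_def)
  then show ?thesis by blast
qed

lemma set_pmf_Omega: "n \<ge> 1 \<Longrightarrow> \<Phi> \<in> set_pmf (Omega n m) \<Longrightarrow> set \<Phi> \<subseteq> horn_clauses n"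
  using set_pmf_iid_list[of \<Phi> m "pmf_of_set (horn_clauses n)"] horn_clauses_nonempty[of n]
    finite_horn_clauses[of n]
  by (simp add: Omega_def)

lemma measure_Omega_contains_le:
  assumes "n \<ge> 1" and "finite C"
  shows "measure_pmf.prob (Omega n m) {\<Phi>. C \<subseteq> set \<Phi>} \<le> (real m / (real n * 2 ^ n)) ^ card C"
proof -
  have "pmf (pmf_of_set (horn_clauses n)) x \<le> 1 / card (horn_clauses n)" for x
    using finite_horn_clauses[of n] horn_clauses_nonempty[OF assms(1)]
    by (simp add: indicator_def)
  also have "1 / card (horn_clauses n) \<le> 1 / (real n * 2 ^ n)"
  proof (rule divide_left_mono)
    show "real n * 2 ^ n \<le> real (card (horn_clauses n))"
      using card_horn_clauses_ge[of n] by (metis of_nat_le_iff of_nat_mult of_nat_numeral of_nat_power)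
    moreover have "0 < real n * 2 ^ n"
      using assms by simp
    ultimately show "0 < real (card (horn_clauses n)) * (real n * 2 ^ n)"
      by - (rule mult_pos_pos; linarith)
  qed simp
  finally have "measure_pmf.prob (iid_list m (pmf_of_set (horn_clauses n))) {\<Phi>. C \<subseteq> set \<Phi>}
      \<le> (real m * (1 / (real n * 2 ^ n))) ^ card C"
    by (rule measure_iid_list_contains_le[OF _ \<open>finite C\<close>])
  then show ?thesis
    by (simp add: Omega_def)
qed

definition assign_true_set :: "nat set \<Rightarrow> clause list \<Rightarrow> clause list" where
  "assign_true_set A \<Phi> = map (\<lambda>(P, S). (P, S - A)) (filter (\<lambda>(P, S). P \<notin> Some ` A) \<Phi>)"

lemma assign_true_set_empty [simp]: "assign_true_set {} \<Phi> = \<Phi>"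
  by (induction \<Phi>) (auto simp: assign_true_set_def)

lemma assign_true_assign_true_set:
  "assign_true i (assign_true_set A \<Phi>) = assign_true_set (insert i A) \<Phi>"
  by (induction \<Phi>) (auto simp: assign_true_set_def assign_true_def)

lemma finite_pos_units: "finite (pos_units \<Phi>)"
proof -
  have "pos_units \<Phi> \<subseteq> (\<lambda>(P, S). the P) ` set \<Phi>"
    by (force simp: pos_units_def)
  then show ?thesis by (rule finite_subset) auto
qed

lemma pur_rejects_within_imp_forced_set:
  assumes "True \<in> set_pmf (pur_rejects_within k (assign_true_set A \<Phi>))"
  shows "\<exists>B. B \<noteq> {} \<and> finite B \<and> card B \<le> k \<and> B \<inter> A = {} \<and>
           (\<forall>b\<in>B. \<exists>T \<subseteq> A \<union> B. (Some b, T) \<in> set \<Phi>) \<and> (\<exists>S \<subseteq> A \<union> B. (None, S) \<in> set \<Phi>)"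
  using assms
proof (induction k arbitrary: A)
  case 0
  then show ?case by simp
next
  case (Suc k)
  then have "pos_units (assign_true_set A \<Phi>) \<noteq> {}"
    by (auto split: if_splits)
  with Suc.prems obtain i where "i \<in> pos_units (assign_true_set A \<Phi>)" and
    rejects: "True \<in> set_pmf (if (None, {i}) \<in> set (assign_true_set A \<Phi>) then return_pmf True
                else pur_rejects_within k (assign_true i (assign_true_set A \<Phi>)))"
    by (auto simp: finite_pos_units)
  then obtain T where T: "(Some i, T) \<in> set \<Phi>" "i \<notin> A" "T \<subseteq> A"
    by (force simp: pos_units_def assign_true_set_def)
  show ?case
  proof (cases "(None, {i}) \<in> set (assign_true_set A \<Phi>)")
    case True
    then obtain S where "(None, S) \<in> set \<Phi>" "S - A = {i}"
      by (force simp: assign_true_set_def)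
    then show ?thesis
      using T by (intro exI[of _ "{i}"]) auto
  next
    case False
    with rejects Suc.IH[of "insert i A"] obtain B where B: "B \<noteq> {}" "finite B" "card B \<le> k"
      "B \<inter> insert i A = {}" "\<forall>b\<in>B. \<exists>T \<subseteq> insert i A \<union> B. (Some b, T) \<in> set \<Phi>"
      "\<exists>S \<subseteq> insert i A \<union> B. (None, S) \<in> set \<Phi>"
      by (auto simp: assign_true_assign_true_set)
    then show ?thesis
      using T by (intro exI[of _ "insert i B"]) auto
  qed
qed

fun witness_clauses :: "nat set \<times> (nat \<Rightarrow> nat set) \<times> nat set \<Rightarrow> clause set" where
  "witness_clauses (B, T, S) = insert (None, S) ((\<lambda>b. (Some b, T b)) ` B)"

text \<open>PUR only needs \<open>T b\<close> among the variables forced before \<open>b\<close>; allowing all of \<open>B\<close>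
  merely over-counts.\<close>

definition witness_params :: "nat \<Rightarrow> nat \<Rightarrow> (nat set \<times> (nat \<Rightarrow> nat set) \<times> nat set) set" where
  "witness_params n j = (SIGMA B:{B. B \<subseteq> {1..n} \<and> card B = j}. (\<Pi>\<^sub>E b\<in>B. Pow B) \<times> Pow B)"

lemma card_witness_clauses: "finite B \<Longrightarrow> card (witness_clauses (B, T, S)) = Suc (card B)"
  by (simp add: card_insert_if card_image inj_on_def image_iff)

lemma finite_witness_params: "finite (witness_params n j)"
  unfolding witness_params_def
  by (intro finite_SigmaI finite_PiE) (auto intro: finite_subset)

lemma card_witness_params: "card (witness_params n j) = (n choose j) * 2 ^ (j * j) * 2 ^ j"
proof -
  have "card ((\<Pi>\<^sub>E b\<in>B. Pow B) \<times> Pow B) = 2 ^ (j * j) * 2 ^ j"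
    if "B \<subseteq> {1..n}" "card B = j" for B
    using that finite_subset[OF that(1)]
    by (simp add: card_cartesian_product card_PiE card_Pow power_mult)
  then show ?thesis
    unfolding witness_params_def
    by (subst card_SigmaI) (auto intro: finite_subset finite_PiE simp: n_subsets)
qed

lemma pur_rejects_within_imp_witness:
  assumes horn: "set \<Phi> \<subseteq> horn_clauses n" and "True \<in> set_pmf (pur_rejects_within k \<Phi>)"
  shows "\<exists>j\<in>{1..k}. \<exists>w\<in>witness_params n j. witness_clauses w \<subseteq> set \<Phi>"
proof -
  obtain B S where B: "B \<noteq> {}" "finite B" "card B \<le> k"
    "\<forall>b\<in>B. \<exists>T \<subseteq> B. (Some b, T) \<in> set \<Phi>" and S: "S \<subseteq> B" "(None, S) \<in> set \<Phi>"
    using pur_rejects_within_imp_forced_set[of k "{}" \<Phi>] assms(2) by auto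
  then obtain T where T: "\<forall>b\<in>B. T b \<subseteq> B \<and> (Some b, T b) \<in> set \<Phi>"
    by metis
  have "B \<subseteq> {1..n}"
    using T horn by (auto simp: horn_clauses_def)
  then have "(B, restrict T B, S) \<in> witness_params n (card B)"
    using T S by (auto simp: witness_params_def)
  moreover have "witness_clauses (B, restrict T B, S) \<subseteq> set \<Phi>"
    using T S by auto
  moreover have "card B \<in> {1..k}"
    using B by (auto simp: Suc_le_eq card_gt_0_iff)
  ultimately show ?thesis by blast
qed

lemma measure_Omega_contains_witness_le:
  assumes "n \<ge> 1" and "w \<in> witness_params n j"
  shows "measure_pmf.prob (Omega n m) {\<Phi>. witness_clauses w \<subseteq> set \<Phi>}
           \<le> (real m / (real n * 2 ^ n)) ^ (j + 1)"
proof -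
  obtain B T S where w: "w = (B, T, S)" "finite B" "card B = j"
    using assms(2) by (auto simp: witness_params_def intro: finite_subset)
  then have "card (witness_clauses w) = j + 1"
    using card_witness_clauses by simp
  then show ?thesis
    using measure_Omega_contains_le[OF assms(1), of "witness_clauses w" m] card_ge_0_finite
    by fastforce
qed

lemma pmf_Omega_pur_rejects_within_le:
  fixes c :: real
  assumes n: "n \<ge> 1" and m: "real m \<le> c * 2 ^ n"
  shows "pmf (bind_pmf (Omega n m) (pur_rejects_within k)) True
           \<le> (\<Sum>j=1..k. 2 ^ (j * j) * 2 ^ j * c ^ (j + 1)) / n"
proof -
  define E where "E w = {\<Phi>. witness_clauses w \<subseteq> set \<Phi>}" for w
  have "0 \<le> c * 2 ^ n"
    using m by (rule order_trans[OF of_nat_0_le_iff])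
  then have "0 \<le> c"
    by (metis zero_le_mult_iff zero_less_numeral zero_less_power not_le)
  have density: "real m / (real n * 2 ^ n) \<le> c / n"
    using m n by (simp add: field_simps)
  have "pmf (bind_pmf (Omega n m) (pur_rejects_within k)) True
      \<le> measure_pmf.prob (Omega n m) (\<Union>j\<in>{1..k}. \<Union>w\<in>witness_params n j. E w)"
    using pur_rejects_within_imp_witness set_pmf_Omega[OF n]
    by (intro pmf_bind_True_le) (fastforce simp: E_def)
  also have "\<dots> \<le> (\<Sum>j=1..k. \<Sum>w\<in>witness_params n j. measure_pmf.prob (Omega n m) (E w))"
    using finite_witness_params
    by (intro order_trans[OF measure_pmf.finite_measure_subadditive_finite] sum_mono
        measure_pmf.finite_measure_subadditive_finite) auto
  also have "\<dots> \<le> (\<Sum>j=1..k. \<Sum>w\<in>witness_params n j. (c / n) ^ (j + 1))"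
  proof (intro sum_mono)
    fix j w assume "w \<in> witness_params n j"
    then have "measure_pmf.prob (Omega n m) (E w) \<le> (real m / (real n * 2 ^ n)) ^ (j + 1)"
      unfolding E_def by (rule measure_Omega_contains_witness_le[OF n])
    also have "\<dots> \<le> (c / n) ^ (j + 1)"
      by (intro power_mono density) simp
    finally show "measure_pmf.prob (Omega n m) (E w) \<le> (c / n) ^ (j + 1)" .
  qed
  also have "\<dots> \<le> (\<Sum>j=1..k. 2 ^ (j * j) * 2 ^ j * c ^ (j + 1) / n)"
  proof (intro sum_mono)
    fix j
    have "(\<Sum>w\<in>witness_params n j. (c / n) ^ (j + 1))
        = 2 ^ (j * j) * 2 ^ j * (real (n choose j) * (c / n) ^ (j + 1))"
      by (simp add: card_witness_params)
    also have "\<dots> \<le> 2 ^ (j * j) * 2 ^ j * (c ^ (j + 1) / n)"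
      using binomial_mult_power_div_le[OF n \<open>0 \<le> c\<close>] by (rule mult_left_mono) simp
    finally show "(\<Sum>w\<in>witness_params n j. (c / n) ^ (j + 1)) \<le> 2 ^ (j * j) * 2 ^ j * c ^ (j + 1) / n"
      by simp
  qed
  also have "\<dots> = (\<Sum>j=1..k. 2 ^ (j * j) * 2 ^ j * c ^ (j + 1)) / n"
    by (simp add: sum_divide_distrib)
  finally show ?thesis .
qed

theorem mainTheorem8:
  fixes c :: real and k :: nat
  assumes "c > 0" and "k \<ge> 1"
  shows "(\<lambda>n. measure_pmf.prob
            (bind_pmf (Omega n (nat \<lfloor>c * 2 ^ n\<rfloor>)) (pur_rejects_within k)) {False})
         \<longlonglongrightarrow> 1"
proof -
  define K where "K = (\<Sum>j=1..k. 2 ^ (j * j) * 2 ^ j * c ^ (j + 1))"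
  define p where "p n = bind_pmf (Omega n (nat \<lfloor>c * 2 ^ n\<rfloor>)) (pur_rejects_within k)" for n
  have "1 - K / n \<le> pmf (p n) False" if "n \<ge> 1" for n
    using pmf_Omega_pur_rejects_within_le[OF that, of "nat \<lfloor>c * 2 ^ n\<rfloor>" c k] assms(1)
    by (simp add: p_def K_def pmf_False_conv_True)
  then have "\<forall>\<^sub>F n in sequentially. 1 - K / n \<le> pmf (p n) False"
    by (intro eventually_sequentiallyI[of 1])
  moreover have "\<forall>\<^sub>F n in sequentially. pmf (p n) False \<le> 1"
    by (simp add: pmf_le_1)
  moreover have "(\<lambda>n. 1 - K / n) \<longlonglongrightarrow> 1"
    using tendsto_diff[OF tendsto_const lim_const_over_n, of 1 K] by simp
  ultimately have "(\<lambda>n. pmf (p n) False) \<longlonglongrightarrow> 1"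
    by (rule tendsto_sandwich) simp
  then show ?thesis
    by (simp add: p_def measure_pmf_single)
qed

end
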